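(* Let $G$ be a finitely generated group hyperbolic relative to a finite collection $\mathcal P=\{P_\lambda\}_{\lambda\in\Lambda}$, $S$ a finite generating set, and $n\ge1$. Then the $G$-stabiliser of the barycentre of any simplex of the $n$-Rips complex $\Gamma_n^\blacktriangle$ that is not a vertex is finite.
   Context: Let $\Gamma$ be the Cayley graph of $G$ with respect to $S$, $V=G$, $W$ the set of cosets $gP_\lambda$. Relative hyperbolicity means the coned-off Cayley graph (vertex set $V\cup W$, edges of $\Gamma$ plus an edge $(v,w)$ whenever $v\in w$) is fine and $\delta$-hyperbolic. Extend $|\cdot,\cdot|_S$ to $V\cup W$ via distances in $\Gamma$ between the corresponding elements/cosets. $\Gamma_n$ has vertex set $V\cup W$ and an edge between $u\ne u'$ whenever $|u,u'|_S\le n$; $\Gamma_n^\blacktriangle$ is obtained by spanning simplices on all cliques of $\Gamma_n$, with $G$ acting by left multiplication. *)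

theory Defs
  imports "HOL-Algebra.Algebra"
begin

definition walk :: "('v \<Rightarrow> 'v \<Rightarrow> bool) \<Rightarrow> 'v list \<Rightarrow> bool" where
  "walk adj xs \<longleftrightarrow> xs \<noteq> [] \<and> (\<forall>i. Suc i < length xs \<longrightarrow> adj (xs ! i) (xs ! Suc i))"

definition graph_connected :: "'v set \<Rightarrow> ('v \<Rightarrow> 'v \<Rightarrow> bool) \<Rightarrow> bool" where
  "graph_connected Vs adj \<longleftrightarrow>
     (\<forall>x\<in>Vs. \<forall>y\<in>Vs. \<exists>xs. walk adj xs \<and> set xs \<subseteq> Vs \<and> hd xs = x \<and> last xs = y)"

definition gdist :: "'v set \<Rightarrow> ('v \<Rightarrow> 'v \<Rightarrow> bool) \<Rightarrow> 'v \<Rightarrow> 'v \<Rightarrow> nat" where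
  "gdist Vs adj x y = (LEAST n. \<exists>xs. walk adj xs \<and> set xs \<subseteq> Vs \<and> hd xs = x \<and> last xs = y
                                   \<and> length xs = Suc n)"

definition circuit :: "('v \<Rightarrow> 'v \<Rightarrow> bool) \<Rightarrow> 'v list \<Rightarrow> bool" where
  "circuit adj xs \<longleftrightarrow> length xs \<ge> 3 \<and> distinct xs \<and> walk adj xs \<and> adj (last xs) (hd xs)"

definition edge_in_circuit :: "'v \<Rightarrow> 'v \<Rightarrow> 'v list \<Rightarrow> bool" where
  "edge_in_circuit u v xs \<longleftrightarrow>
     (\<exists>i < length xs. {xs ! i, xs ! (Suc i mod length xs)} = {u, v})"

definition fine_graph :: "'v set \<Rightarrow> ('v \<Rightarrow> 'v \<Rightarrow> bool) \<Rightarrow> bool" where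
  "fine_graph Vs adj \<longleftrightarrow>
     (\<forall>u\<in>Vs. \<forall>v\<in>Vs. adj u v \<longrightarrow> (\<forall>n::nat.
        finite {xs. set xs \<subseteq> Vs \<and> circuit adj xs \<and> length xs = n \<and> edge_in_circuit u v xs}))"

definition gromov_product :: "'v set \<Rightarrow> ('v \<Rightarrow> 'v \<Rightarrow> bool) \<Rightarrow> 'v \<Rightarrow> 'v \<Rightarrow> 'v \<Rightarrow> real" where
  "gromov_product Vs adj w x y =
     (real (gdist Vs adj x w) + real (gdist Vs adj y w) - real (gdist Vs adj x y)) / 2"

definition hyperbolic_graph :: "'v set \<Rightarrow> ('v \<Rightarrow> 'v \<Rightarrow> bool) \<Rightarrow> real \<Rightarrow> bool" where
  "hyperbolic_graph Vs adj \<delta> \<longleftrightarrow> graph_connected Vs adj \<and>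
     (\<forall>w\<in>Vs. \<forall>x\<in>Vs. \<forall>y\<in>Vs. \<forall>z\<in>Vs.
        gromov_product Vs adj w x y \<ge>
          min (gromov_product Vs adj w x z) (gromov_product Vs adj w y z) - \<delta>)"

definition cayley_adj :: "('a, 'b) monoid_scheme \<Rightarrow> 'a set \<Rightarrow> 'a \<Rightarrow> 'a \<Rightarrow> bool" where
  "cayley_adj G S g h \<longleftrightarrow> g \<in> carrier G \<and> h \<in> carrier G \<and> g \<noteq> h \<and>
     (\<exists>s\<in>S. h = g \<otimes>\<^bsub>G\<^esub> s \<or> g = h \<otimes>\<^bsub>G\<^esub> s)"

text \<open>Vertices V \<union> W: group elements (Inl g) and cosets g P_lambda, tagged by lambda.\<close>
type_synonym ('a, 'i) cvert = "'a + ('i \<times> 'a set)"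

definition coned_verts :: "('a, 'b) monoid_scheme \<Rightarrow> 'i set \<Rightarrow> ('i \<Rightarrow> 'a set) \<Rightarrow> ('a, 'i) cvert set" where
  "coned_verts G \<Lambda> P = Inl ` carrier G \<union>
     {Inr (l, g <#\<^bsub>G\<^esub> P l) | l g. l \<in> \<Lambda> \<and> g \<in> carrier G}"

definition coned_adj :: "('a, 'b) monoid_scheme \<Rightarrow> 'a set \<Rightarrow> 'i set \<Rightarrow> ('i \<Rightarrow> 'a set)
    \<Rightarrow> ('a, 'i) cvert \<Rightarrow> ('a, 'i) cvert \<Rightarrow> bool" where
  "coned_adj G S \<Lambda> P u v \<longleftrightarrow> u \<in> coned_verts G \<Lambda> P \<and> v \<in> coned_verts G \<Lambda> P \<and>
     (case (u, v) of
        (Inl g, Inl h) \<Rightarrow> cayley_adj G S g h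
      | (Inl g, Inr (l, C)) \<Rightarrow> g \<in> C
      | (Inr (l, C), Inl g) \<Rightarrow> g \<in> C
      | (Inr _, Inr _) \<Rightarrow> False)"

definition rel_hyperbolic :: "('a, 'b) monoid_scheme \<Rightarrow> 'a set \<Rightarrow> 'i set \<Rightarrow> ('i \<Rightarrow> 'a set) \<Rightarrow> bool" where
  "rel_hyperbolic G S \<Lambda> P \<longleftrightarrow>
     fine_graph (coned_verts G \<Lambda> P) (coned_adj G S \<Lambda> P) \<and>
     (\<exists>\<delta>. hyperbolic_graph (coned_verts G \<Lambda> P) (coned_adj G S \<Lambda> P) \<delta>)"

definition word_dist :: "('a, 'b) monoid_scheme \<Rightarrow> 'a set \<Rightarrow> 'a \<Rightarrow> 'a \<Rightarrow> nat" where
  "word_dist G S = gdist (carrier G) (cayley_adj G S)"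

definition vset :: "('a, 'i) cvert \<Rightarrow> 'a set" where
  "vset u = (case u of Inl g \<Rightarrow> {g} | Inr (l, C) \<Rightarrow> C)"

definition ext_dist :: "('a, 'b) monoid_scheme \<Rightarrow> 'a set \<Rightarrow> ('a, 'i) cvert \<Rightarrow> ('a, 'i) cvert \<Rightarrow> nat" where
  "ext_dist G S u v = Inf {word_dist G S a b | a b. a \<in> vset u \<and> b \<in> vset v}"

definition rips_adj :: "('a, 'b) monoid_scheme \<Rightarrow> 'a set \<Rightarrow> 'i set \<Rightarrow> ('i \<Rightarrow> 'a set) \<Rightarrow> nat
    \<Rightarrow> ('a, 'i) cvert \<Rightarrow> ('a, 'i) cvert \<Rightarrow> bool" where
  "rips_adj G S \<Lambda> P n u v \<longleftrightarrow> u \<in> coned_verts G \<Lambda> P \<and> v \<in> coned_verts G \<Lambda> P \<and> u \<noteq> v \<and>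
     ext_dist G S u v \<le> n"

definition rips_simplex :: "('a, 'b) monoid_scheme \<Rightarrow> 'a set \<Rightarrow> 'i set \<Rightarrow> ('i \<Rightarrow> 'a set) \<Rightarrow> nat
    \<Rightarrow> ('a, 'i) cvert set \<Rightarrow> bool" where
  "rips_simplex G S \<Lambda> P n \<sigma> \<longleftrightarrow> finite \<sigma> \<and> \<sigma> \<noteq> {} \<and> \<sigma> \<subseteq> coned_verts G \<Lambda> P \<and>
     (\<forall>u\<in>\<sigma>. \<forall>v\<in>\<sigma>. u \<noteq> v \<longrightarrow> rips_adj G S \<Lambda> P n u v)"

section \<open>Geometric realisation: points as barycentric coordinate functions\<close>

definition vact :: "('a, 'b) monoid_scheme \<Rightarrow> 'a \<Rightarrow> ('a, 'i) cvert \<Rightarrow> ('a, 'i) cvert" where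
  "vact G g u = (case u of Inl h \<Rightarrow> Inl (g \<otimes>\<^bsub>G\<^esub> h) | Inr (l, C) \<Rightarrow> Inr (l, g <#\<^bsub>G\<^esub> C))"

definition pact :: "('a, 'b) monoid_scheme \<Rightarrow> 'a \<Rightarrow> (('a, 'i) cvert \<Rightarrow> real) \<Rightarrow> (('a, 'i) cvert \<Rightarrow> real)" where
  "pact G g p = (\<lambda>u. p (vact G (inv\<^bsub>G\<^esub> g) u))"

definition barycentre :: "('a, 'i) cvert set \<Rightarrow> (('a, 'i) cvert \<Rightarrow> real)" where
  "barycentre \<sigma> = (\<lambda>u. if u \<in> \<sigma> then 1 / real (card \<sigma>) else 0)"

definition point_stabiliser :: "('a, 'b) monoid_scheme \<Rightarrow> (('a, 'i) cvert \<Rightarrow> real) \<Rightarrow> 'a set" where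
  "point_stabiliser G p = {g \<in> carrier G. pact G g p = p}"

end

theory Submission
  imports Defs
begin

text \<open>
  A group element fixing the barycentre of a simplex permutes its finitely many vertices, so
  the stabiliser is a finite union of cosets of the pointwise stabiliser of two distinct
  vertices u, v; it suffices to show that this pointwise stabiliser is finite.  A vertex
  that is a group element has trivial stabiliser.  If u is a coset, follow a walk from v
  to u up to the first arrival at u; its last vertex is some a \<in> u.  For k fixing u and v,
  this walk followed by the reversed k-translate is a walk from a to k a avoiding u, of
  length bounded independently of k; closing it up through u gives a circuit through the
  edge (u, a) of bounded length.  Fineness leaves only finitely many such circuits, hence
  finitely many possible k a, hence finitely many k.
\<close>

lemma walk_iff_successively: "walk adj xs \<longleftrightarrow> xs \<noteq> [] \<and> successively adj xs"
  unfolding walk_def successively_conv_nth by auto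

lemma walk_append_tl:
  assumes "walk adj xs" "walk adj ys" "last xs = hd ys"
  shows "walk adj (xs @ tl ys)" "last (xs @ tl ys) = last ys"
proof -
  obtain y ys' where "ys = y # ys'" using assms(2) unfolding walk_def by (cases ys) auto
  then show "walk adj (xs @ tl ys)" "last (xs @ tl ys) = last ys" using assms
    by (cases ys'; auto simp: walk_iff_successively successively_append_iff successively_Cons)+
qed

lemma walk_rev:
  assumes "walk adj xs" "\<And>x y. adj x y \<Longrightarrow> adj y x"
  shows "walk adj (rev xs)"
  using assms unfolding walk_iff_successively by (auto elim: successively_mono)

lemma walk_map:
  assumes "walk adj xs" "\<And>x y. adj x y \<Longrightarrow> adj' (f x) (f y)"
  shows "walk adj' (map f xs)"
  using assms unfolding walk_iff_successively successively_map by (auto elim: successively_mono)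

lemma walk_shortcut_distinct:
  assumes "walk adj xs"
  obtains ys where "walk adj ys" "distinct ys" "set ys \<subseteq> set xs" "hd ys = hd xs"
    "last ys = last xs" "length ys \<le> length xs"
  using assms
proof (induction xs rule: length_induct)
  case (1 ws)
  show ?case
  proof (cases "distinct ws")
    case True
    then show ?thesis using "1.prems" by blast
  next
    case False
    then obtain xs y ys zs where ws: "ws = xs @ [y] @ ys @ [y] @ zs"
      using not_distinct_decomp by blast
    let ?ws' = "xs @ [y] @ zs"
    have "walk adj ?ws'" using "1.prems"(2) unfolding ws walk_iff_successively
      by (auto simp: successively_append_iff successively_Cons)
    moreover have "hd ?ws' = hd ws" "last ?ws' = last ws" "set ?ws' \<subseteq> set ws"
      "length ?ws' < length ws"
      using ws by (cases xs; auto)+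
    ultimately show ?thesis using "1.IH" "1.prems"(1)
      by (metis (no_types, lifting) order.trans less_imp_le)
  qed
qed

lemma connected_walk_to_neighbour:
  assumes "graph_connected Vs adj" "u \<in> Vs" "v \<in> Vs" "u \<noteq> v"
  obtains ws where "walk adj ws" "set ws \<subseteq> Vs - {u}" "hd ws = v" "adj (last ws) u"
proof -
  obtain w where w: "walk adj w" "set w \<subseteq> Vs" "hd w = v" "last w = u"
    using assms unfolding graph_connected_def by blast
  define ws where "ws = takeWhile (\<lambda>x. x \<noteq> u) w"
  have "u \<in> set w" using w(1,4) unfolding walk_def by auto
  then have "dropWhile (\<lambda>x. x \<noteq> u) w \<noteq> []" by (simp add: dropWhile_eq_Nil_conv)
  moreover from hd_dropWhile[OF this] have "hd (dropWhile (\<lambda>x. x \<noteq> u) w) = u" by simp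
  ultimately obtain rest where split: "w = ws @ u # rest"
    unfolding ws_def by (metis takeWhile_dropWhile_id list.collapse)
  have "ws \<noteq> []" using split w(3) assms(4) by (cases ws) auto
  moreover have "successively adj (ws @ u # rest)" using w(1) split walk_iff_successively by metis
  ultimately have "walk adj ws" "adj (last ws) u"
    by (auto simp: walk_iff_successively successively_append_iff)
  moreover have "set ws \<subseteq> Vs - {u}" using w(2) set_takeWhileD unfolding ws_def by fastforce
  moreover have "hd ws = v" using split w(3) \<open>ws \<noteq> []\<close> by simp
  ultimately show ?thesis using that by blast
qed

text \<open>
  If y \<noteq> x ends such a walk, shortcutting it to a path and prepending u yields a circuit
  of length at most L + 1 through the edge (u, x) that contains y.
\<close>
lemma fine_graph_finite_detour_ends:
  assumes fine: "fine_graph Vs adj" and "u \<in> Vs" "x \<in> Vs" "adj u x"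
  shows "finite {y. adj y u \<and> (\<exists>ws. walk adj ws \<and> set ws \<subseteq> Vs - {u} \<and> hd ws = x
                      \<and> last ws = y \<and> length ws \<le> L)}"
    (is "finite ?Y")
proof -
  define Circ where "Circ = (\<Union>m\<in>{..Suc L}. {cs. set cs \<subseteq> Vs \<and> circuit adj cs \<and> length cs = m
                                               \<and> edge_in_circuit u x cs})"
  have "finite Circ" unfolding Circ_def using fine assms(2-4) unfolding fine_graph_def by blast
  moreover have "?Y \<subseteq> insert x (\<Union> (set ` Circ))"
  proof
    fix y assume "y \<in> ?Y"
    then obtain ws where y: "adj y u" and ws: "walk adj ws" "set ws \<subseteq> Vs - {u}" "hd ws = x"
      "last ws = y" "length ws \<le> L" by blast
    show "y \<in> insert x (\<Union> (set ` Circ))"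
    proof (cases "y = x")
      case False
      obtain ys where ys: "walk adj ys" "distinct ys" "set ys \<subseteq> Vs - {u}" "hd ys = x"
        "last ys = y" "length ys \<le> L"
        using walk_shortcut_distinct[OF ws(1)] ws(2-5) by (metis order.trans)
      have "ys \<noteq> []" using ys(1) unfolding walk_def by simp
      with ys(4,5) False obtain ys' where ys': "ys = x # ys'" "ys' \<noteq> []"
        by (cases ys) (auto split: if_splits)
      let ?c = "u # ys"
      have "circuit adj ?c"
        using ys ys' y \<open>adj u x\<close> unfolding circuit_def
        by (auto simp: walk_iff_successively Suc_le_eq)
      moreover have "edge_in_circuit u x ?c"
        unfolding edge_in_circuit_def using ys' by (intro exI[of _ 0]) auto
      ultimately have "?c \<in> Circ" unfolding Circ_def using ys(3,6) \<open>u \<in> Vs\<close> by auto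
      moreover have "y \<in> set ?c" using ys(5) \<open>ys \<noteq> []\<close> by auto
      ultimately show ?thesis by blast
    qed simp
  qed
  ultimately show ?thesis by (simp add: finite_subset)
qed

context group
begin

lemma finite_by_finite_stabiliser:
  fixes act :: "'a \<Rightarrow> 'x \<Rightarrow> 'x"
  assumes act_mult: "\<And>g h. g \<in> carrier G \<Longrightarrow> h \<in> carrier G \<Longrightarrow> act g (act h x) = act (g \<otimes> h) x"
    and act_one: "act \<one> x = x"
    and stab: "finite {k \<in> carrier G. act k x = x}"
    and "H \<subseteq> carrier G" "finite F" "\<And>g. g \<in> H \<Longrightarrow> act g x \<in> F"
  shows "finite H"
proof -
  have fibre: "finite {g \<in> H. act g x = y}" for y
  proof (cases "\<exists>g0 \<in> H. act g0 x = y")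
    case True
    then obtain g0 where g0: "g0 \<in> H" "act g0 x = y" by blast
    have g0G: "g0 \<in> carrier G" using g0 \<open>H \<subseteq> carrier G\<close> by blast
    have "{g \<in> H. act g x = y} \<subseteq> (\<lambda>k. g0 \<otimes> k) ` {k \<in> carrier G. act k x = x}"
    proof
      fix g assume g: "g \<in> {g \<in> H. act g x = y}"
      then have gG: "g \<in> carrier G" using \<open>H \<subseteq> carrier G\<close> by blast
      have "act (inv g0 \<otimes> g) x = act (inv g0) (act g0 x)"
        using g g0 gG g0G act_mult[of "inv g0" g, symmetric] by simp
      also have "\<dots> = x" using g0G act_mult act_one by simp
      finally have "inv g0 \<otimes> g \<in> {k \<in> carrier G. act k x = x}" using gG g0G by simp
      moreover have "g = g0 \<otimes> (inv g0 \<otimes> g)" using gG g0G by (simp add: m_assoc [symmetric])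
      ultimately show "g \<in> (\<lambda>k. g0 \<otimes> k) ` {k \<in> carrier G. act k x = x}" by blast
    qed
    then show ?thesis using stab finite_subset by blast
  next
    case False
    then have "{g \<in> H. act g x = y} = {}" by blast
    then show ?thesis by (simp only: finite.emptyI)
  qed
  have "H \<subseteq> (\<Union>y\<in>F. {g \<in> H. act g x = y})" using assms(6) by blast
  then show ?thesis by (rule finite_subset) (use fibre \<open>finite F\<close> in blast)
qed

end

locale coned_off_cayley = group +
  fixes S :: "'a set" and \<Lambda> :: "'i set" and P :: "'i \<Rightarrow> 'a set"
  assumes generators_closed: "S \<subseteq> carrier G"
    and peripheral_subgroup: "\<And>l. l \<in> \<Lambda> \<Longrightarrow> subgroup (P l) G"
begin

abbreviation "V \<equiv> coned_verts G \<Lambda> P"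
abbreviation "adj \<equiv> coned_adj G S \<Lambda> P"

lemma coset_vertex_subset_carrier: "Inr (l, C) \<in> V \<Longrightarrow> C \<subseteq> carrier G"
  unfolding coned_verts_def
  using l_coset_subset_G[OF subgroup.subset] peripheral_subgroup by blast

lemma vact_closed:
  assumes "g \<in> carrier G" "u \<in> V"
  shows "vact G g u \<in> V"
proof (cases u)
  case (Inl h)
  then show ?thesis using assms unfolding coned_verts_def vact_def by auto
next
  case (Inr lC)
  then obtain l h where u: "u = Inr (l, h <# P l)" "l \<in> \<Lambda>" "h \<in> carrier G"
    using assms(2) unfolding coned_verts_def by auto
  then have "g <# (h <# P l) = (g \<otimes> h) <# P l"
    using assms(1) peripheral_subgroup subgroup.subset by (metis lcos_m_assoc)
  then show ?thesis using u assms(1) unfolding coned_verts_def vact_def by auto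
qed

lemma vact_mult:
  assumes "g \<in> carrier G" "h \<in> carrier G" "u \<in> V"
  shows "vact G g (vact G h u) = vact G (g \<otimes> h) u"
proof (cases u)
  case (Inl x)
  then show ?thesis using assms unfolding coned_verts_def vact_def by (auto simp: m_assoc)
next
  case (Inr lC)
  then obtain l C where "u = Inr (l, C)" by (cases lC) auto
  then show ?thesis
    using assms coset_vertex_subset_carrier unfolding vact_def by (simp add: lcos_m_assoc)
qed

lemma vact_one:
  assumes "u \<in> V"
  shows "vact G \<one> u = u"
proof (cases u)
  case (Inl x)
  then show ?thesis using assms unfolding coned_verts_def vact_def by auto
next
  case (Inr lC)
  then obtain l C where "u = Inr (l, C)" by (cases lC) auto
  then show ?thesis
    using assms coset_vertex_subset_carrier unfolding vact_def by (simp add: lcos_mult_one)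
qed

lemma vact_inv_cancel: "g \<in> carrier G \<Longrightarrow> u \<in> V \<Longrightarrow> vact G (inv g) (vact G g u) = u"
  by (simp add: vact_mult vact_one)

lemma coned_adj_sym: "adj u v \<Longrightarrow> adj v u"
  unfolding coned_adj_def cayley_adj_def by (auto split: sum.splits prod.splits)

lemma coned_adj_vact:
  assumes k: "k \<in> carrier G" and "adj u v"
  shows "adj (vact G k u) (vact G k v)"
proof -
  have cayley: "cayley_adj G S (k \<otimes> g) (k \<otimes> h)" if "cayley_adj G S g h" for g h
    using that k generators_closed unfolding cayley_adj_def
    by (auto simp: m_assoc) (metis m_assoc subsetD)+
  have coset: "k \<otimes> g \<in> k <# C" if "g \<in> C" for g C
    using that unfolding l_coset_def by auto
  show ?thesis using assms vact_closed unfolding coned_adj_def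
    by (auto simp: vact_def split: sum.splits prod.splits intro: cayley coset)
qed

lemma vact_fixes_element_iff:
  "Inl h \<in> V \<Longrightarrow> k \<in> carrier G \<Longrightarrow> vact G k (Inl h) = Inl h \<longleftrightarrow> k = \<one>"
  unfolding coned_verts_def vact_def by auto

lemma walk_avoiding_vact:
  assumes k: "k \<in> carrier G" "vact G k u = u" and "u \<in> V"
    and p: "walk adj p" "set p \<subseteq> V - {u}"
  shows "walk adj (map (vact G k) p)" "set (map (vact G k) p) \<subseteq> V - {u}"
proof -
  show "walk adj (map (vact G k) p)" using p(1) by (rule walk_map) (rule coned_adj_vact[OF k(1)])
  have "vact G k y \<noteq> u" if "y \<in> V - {u}" for y
  proof
    assume "vact G k y = u"
    then have "vact G (inv k) (vact G k y) = vact G (inv k) (vact G k u)" using k(2) by simp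
    then show False using that vact_inv_cancel[OF k(1)] \<open>u \<in> V\<close> by simp
  qed
  then show "set (map (vact G k) p) \<subseteq> V - {u}" using p(2) vact_closed[OF k(1)] by auto
qed

lemma walk_to_translate_avoiding:
  assumes k: "k \<in> carrier G" "vact G k u = u" "vact G k v = v" and "u \<in> V"
    and p: "walk adj p" "set p \<subseteq> V - {u}" "hd p = v" "last p = Inl a"
  shows "\<exists>ws. walk adj ws \<and> set ws \<subseteq> V - {u} \<and> hd ws = Inl a \<and> last ws = Inl (k \<otimes> a)
              \<and> length ws \<le> 2 * length p"
proof (intro exI conjI)
  define q where "q = map (vact G k) p"
  have "p \<noteq> []" using p(1) unfolding walk_def by simp
  have q: "walk adj q" "set q \<subseteq> V - {u}"
    unfolding q_def using walk_avoiding_vact[OF k(1,2) \<open>u \<in> V\<close> p(1,2)] by auto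
  have q_ends: "hd q = v" "last q = Inl (k \<otimes> a)"
    unfolding q_def using \<open>p \<noteq> []\<close> p(3,4) k(3) by (auto simp: hd_map last_map vact_def)
  have "walk adj (rev p)" using p(1) coned_adj_sym by (rule walk_rev)
  moreover have "last (rev p) = hd q" using q_ends p(3) \<open>p \<noteq> []\<close> by (simp add: last_rev)
  ultimately show "walk adj (rev p @ tl q)" "last (rev p @ tl q) = Inl (k \<otimes> a)"
    using walk_append_tl[OF _ q(1)] q_ends(2) by auto
  show "set (rev p @ tl q) \<subseteq> V - {u}" using p(2) q(2) by (cases q) auto
  show "hd (rev p @ tl q) = Inl a" using \<open>p \<noteq> []\<close> p(4) by (simp add: hd_rev)
  show "length (rev p @ tl q) \<le> 2 * length p" unfolding q_def by simp
qed

lemma finite_pair_stabiliser_coset: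
  assumes fine: "fine_graph V adj" and conn: "graph_connected V adj"
    and u: "u = Inr (l, C)" "u \<in> V" and v: "v \<in> V" "v \<noteq> u"
  shows "finite {k \<in> carrier G. vact G k u = u \<and> vact G k v = v}"
proof -
  obtain p where p: "walk adj p" "set p \<subseteq> V - {u}" "hd p = v" "adj (last p) u"
    using connected_walk_to_neighbour[OF conn u(2) v(1)] v(2) by blast
  have "p \<noteq> []" using p(1) unfolding walk_def by simp
  then have "last p \<in> V - {u}" using p(2) last_in_set by blast
  then obtain a where a: "last p = Inl a" "a \<in> C"
    using p(4) u(1) unfolding coned_adj_def by (auto split: sum.splits prod.splits)
  have aV: "Inl a \<in> V" using \<open>last p \<in> V - {u}\<close> a(1) by simp
  then have aG: "a \<in> carrier G" unfolding coned_verts_def by auto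
  define Y where "Y = {y. adj y u \<and> (\<exists>ws. walk adj ws \<and> set ws \<subseteq> V - {u} \<and> hd ws = Inl a
                                     \<and> last ws = y \<and> length ws \<le> 2 * length p)}"
  have "finite Y" unfolding Y_def
    by (rule fine_graph_finite_detour_ends[OF fine u(2) aV])
       (use aV u a in \<open>auto simp: coned_adj_def\<close>)
  have detour_end: "Inl (k \<otimes> a) \<in> Y" if k: "k \<in> carrier G" "vact G k u = u" "vact G k v = v" for k
  proof -
    obtain ws where ws: "walk adj ws" "set ws \<subseteq> V - {u}" "hd ws = Inl a"
      "last ws = Inl (k \<otimes> a)" "length ws \<le> 2 * length p"
      using walk_to_translate_avoiding[OF k u(2) p(1-3) a(1)] by blast
    have "k <# C = C" using k(2) u(1) unfolding vact_def by simp
    then have "k \<otimes> a \<in> C" using a(2) unfolding l_coset_def by blast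
    moreover have "Inl (k \<otimes> a) \<in> V"
      using ws(1,2,4) last_in_set unfolding walk_def by fastforce
    ultimately have "adj (Inl (k \<otimes> a)) u" using u unfolding coned_adj_def by auto
    then show ?thesis unfolding Y_def using ws by blast
  qed
  show ?thesis
  proof (rule inj_on_finite[OF _ _ \<open>finite Y\<close>])
    show "inj_on (\<lambda>k. Inl (k \<otimes> a)) {k \<in> carrier G. vact G k u = u \<and> vact G k v = v}"
      using aG by (auto simp: inj_on_def)
  qed (use detour_end in blast)
qed

lemma finite_pair_stabiliser:
  assumes "fine_graph V adj" "graph_connected V adj" "u \<in> V" "v \<in> V" "u \<noteq> v"
  shows "finite {k \<in> carrier G. vact G k u = u \<and> vact G k v = v}"
proof (cases u)
  case (Inl h)
  then have "{k \<in> carrier G. vact G k u = u \<and> vact G k v = v} \<subseteq> {\<one>}"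
    using vact_fixes_element_iff[of h] assms(3) by auto
  then show ?thesis by (rule finite_subset) simp
next
  case (Inr lC)
  then obtain l C where "u = Inr (l, C)" by (cases lC) auto
  then show ?thesis using finite_pair_stabiliser_coset assms by simp
qed

lemma barycentre_stabiliser_permutes:
  assumes "finite \<sigma>" "\<sigma> \<noteq> {}" "\<sigma> \<subseteq> V" "g \<in> point_stabiliser G (barycentre \<sigma>)" "y \<in> \<sigma>"
  shows "vact G g y \<in> \<sigma>"
proof -
  have g: "g \<in> carrier G" "pact G g (barycentre \<sigma>) = barycentre \<sigma>"
    using assms(4) unfolding point_stabiliser_def by auto
  have "barycentre \<sigma> (vact G g y) = pact G g (barycentre \<sigma>) (vact G g y)" using g(2) by simp
  also have "\<dots> = barycentre \<sigma> y"
    unfolding pact_def using vact_inv_cancel g(1) assms(3,5) by auto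
  finally show ?thesis using assms(1,2,5) unfolding barycentre_def by (auto split: if_splits)
qed

lemma finite_barycentre_stabiliser:
  assumes "fine_graph V adj" "graph_connected V adj"
    and "finite \<sigma>" "\<sigma> \<subseteq> V" "u \<in> \<sigma>" "v \<in> \<sigma>" "u \<noteq> v"
  shows "finite (point_stabiliser G (barycentre \<sigma>))"
proof (rule finite_by_finite_stabiliser
    [where act = "\<lambda>g. map_prod (vact G g) (vact G g)" and x = "(u, v)" and F = "\<sigma> \<times> \<sigma>"])
  have uv: "u \<in> V" "v \<in> V" using assms(4-6) by auto
  then show "map_prod (vact G g) (vact G g) (map_prod (vact G h) (vact G h) (u, v)) =
      map_prod (vact G (g \<otimes> h)) (vact G (g \<otimes> h)) (u, v)"
    if "g \<in> carrier G" "h \<in> carrier G" for g h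
    using that by (simp add: vact_mult)
  show "map_prod (vact G \<one>) (vact G \<one>) (u, v) = (u, v)" using uv by (simp add: vact_one)
  show "finite {k \<in> carrier G. map_prod (vact G k) (vact G k) (u, v) = (u, v)}"
    using finite_pair_stabiliser[OF assms(1,2) uv assms(7)] by simp
  show "point_stabiliser G (barycentre \<sigma>) \<subseteq> carrier G" unfolding point_stabiliser_def by auto
  show "finite (\<sigma> \<times> \<sigma>)" using assms(3) by simp
  show "map_prod (vact G g) (vact G g) (u, v) \<in> \<sigma> \<times> \<sigma>"
    if "g \<in> point_stabiliser G (barycentre \<sigma>)" for g
    using barycentre_stabiliser_permutes[OF assms(3) _ assms(4) that] assms(5,6) by auto
qed

end

theorem corollary2p3:
  fixes G :: "('a, 'b) monoid_scheme" and S :: "'a set"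
    and \<Lambda> :: "'i set" and P :: "'i \<Rightarrow> 'a set" and n :: nat
  assumes "group G"
    and "finite S" and "S \<subseteq> carrier G" and "generate G S = carrier G"
    and "finite \<Lambda>" and "\<And>l. l \<in> \<Lambda> \<Longrightarrow> subgroup (P l) G"
    and "rel_hyperbolic G S \<Lambda> P"
    and "n \<ge> 1"
  shows "\<forall>\<sigma>. rips_simplex G S \<Lambda> P n \<sigma> \<and> card \<sigma> \<ge> 2
            \<longrightarrow> finite (point_stabiliser G (barycentre \<sigma>))"
proof (intro allI impI)
  fix \<sigma> assume \<sigma>: "rips_simplex G S \<Lambda> P n \<sigma> \<and> card \<sigma> \<ge> 2"
  interpret coned_off_cayley G S \<Lambda> P
    using assms(1,3,6) by (simp add: coned_off_cayley_def coned_off_cayley_axioms_def)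
  have "fine_graph V adj" "graph_connected V adj"
    using assms(7) unfolding rel_hyperbolic_def hyperbolic_graph_def by blast+
  moreover have "finite \<sigma>" "\<sigma> \<subseteq> V" using \<sigma> unfolding rips_simplex_def by auto
  moreover obtain u v where "u \<in> \<sigma>" "v \<in> \<sigma>" "u \<noteq> v"
    using \<sigma> \<open>finite \<sigma>\<close> card_le_Suc0_iff_eq[of \<sigma>] by (metis One_nat_def not_less_eq_eq numeral_2_eq_2)
  ultimately show "finite (point_stabiliser G (barycentre \<sigma>))"
    by (rule finite_barycentre_stabiliser)
qed

end
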